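(* Let $\mathscr{M}_n$ be the monoid of $n\times n$ Boolean matrices with at least one $1$ in every row and every column, under Boolean matrix multiplication. For all $\alpha,\beta\in\mathscr{M}_n$, with Green's relations taken in $\mathscr{M}_n$: (1) $\alpha\,\mathcal{L}\,\beta$ iff $\langle R(\alpha)\rangle=\langle R(\beta)\rangle$; (2) $\alpha\,\mathcal{R}\,\beta$ iff $\langle C(\alpha)\rangle=\langle C(\beta)\rangle$; (3) $\alpha\,\mathcal{H}\,\beta$ iff $\langle R(\alpha)\rangle=\langle R(\beta)\rangle$ and $\langle C(\alpha)\rangle=\langle C(\beta)\rangle$.
   Context: Boolean arithmetic uses $1+1=1$; rows and columns are vectors in $\{0,1\}^n$, added coordinatewise in this arithmetic and compared coordinatewise ($u\le v$ iff $u_i=1$ implies $v_i=1$). $\mathscr{M}_n$ is isomorphic to the monoid of multipermutations on $[n]$ (binary relations in which every element has a successor and a predecessor) under composition of relations. For $\alpha\in\mathscr{M}_n$: $R(\alpha)$ is the set of rows and $C(\alpha)$ the set of columns of $\alpha$; the row space $V(\alpha)$ is the set of all Boolean sums of rows of $\alpha$ together with the zero vector, and the column space $W(\alpha)$ likewise for columns. $\langle R(\alpha)\rangle=\{\rho\in V(\alpha)\setminus\{0\}:\rho\le\alpha_j\text{ for some row }\alpha_j\text{ of }\alpha\}$ and $\langle C(\alpha)\rangle=\{\kappa\in W(\alpha)\setminus\{0\}:\kappa\le\gamma\text{ for some column }\gamma\text{ of }\alpha\}$. *)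

theory Defs
  imports Main
begin

text \<open>An n x n Boolean matrix is a function 'n => 'n => bool over a finite index type 'n
(so n = CARD('n) is arbitrary). Vectors in {0,1}^n are 'n => bool; the pointwise order
on functions to bool is exactly the coordinatewise order, and Boolean sum is pointwise or.\<close>

type_synonym 'n bmat = "'n \<Rightarrow> 'n \<Rightarrow> bool"
type_synonym 'n bvec = "'n \<Rightarrow> bool"

definition bmult :: "'n bmat \<Rightarrow> 'n bmat \<Rightarrow> 'n bmat" where
  "bmult A B = (\<lambda>i j. \<exists>k. A i k \<and> B k j)"

definition in_Mn :: "'n::finite bmat \<Rightarrow> bool" where
  "in_Mn A \<longleftrightarrow> (\<forall>i. \<exists>j. A i j) \<and> (\<forall>j. \<exists>i. A i j)"

text \<open>Green's relations in the monoid M_n (which contains the identity matrix).\<close>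
definition greenL :: "'n::finite bmat \<Rightarrow> 'n bmat \<Rightarrow> bool" where
  "greenL A B \<longleftrightarrow> (\<exists>G. in_Mn G \<and> A = bmult G B) \<and> (\<exists>D. in_Mn D \<and> B = bmult D A)"

definition greenR :: "'n::finite bmat \<Rightarrow> 'n bmat \<Rightarrow> bool" where
  "greenR A B \<longleftrightarrow> (\<exists>G. in_Mn G \<and> A = bmult B G) \<and> (\<exists>D. in_Mn D \<and> B = bmult A D)"

definition greenH :: "'n::finite bmat \<Rightarrow> 'n bmat \<Rightarrow> bool" where
  "greenH A B \<longleftrightarrow> greenL A B \<and> greenR A B"

definition rows :: "'n bmat \<Rightarrow> 'n bvec set" where
  "rows A = range A"

definition cols :: "'n bmat \<Rightarrow> 'n bvec set" where
  "cols A = range (\<lambda>j. \<lambda>i. A i j)"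

text \<open>Span: all Boolean sums of subsets of the given vectors (the empty sum is the zero vector).\<close>
definition bspan :: "'n bvec set \<Rightarrow> 'n bvec set" where
  "bspan X = {v. \<exists>S\<subseteq>X. v = (\<lambda>k. \<exists>x\<in>S. x k)}"

definition row_space :: "'n bmat \<Rightarrow> 'n bvec set" where
  "row_space A = bspan (rows A)"

definition col_space :: "'n bmat \<Rightarrow> 'n bvec set" where
  "col_space A = bspan (cols A)"

definition genR :: "'n bmat \<Rightarrow> 'n bvec set" where
  "genR A = {\<rho> \<in> row_space A. \<rho> \<noteq> (\<lambda>_. False) \<and> (\<exists>r\<in>rows A. \<rho> \<le> r)}"

definition genC :: "'n bmat \<Rightarrow> 'n bvec set" where
  "genC A = {\<kappa> \<in> col_space A. \<kappa> \<noteq> (\<lambda>_. False) \<and> (\<exists>c\<in>cols A. \<kappa> \<le> c)}"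

end

theory Submission
  imports Defs
begin

(* A matrix A without zero rows is a left multiple G B with G in M_n exactly when every row
   of A is a Boolean sum of rows of B (the rows of G are nonzero) and every row of B lies below
   some row of A (the columns of G are nonzero); the canonical witness is G i k = (B k <= A i).
   On the other hand <R(A)> is contained in <R(B)> exactly when every row of A is a sum of rows
   of B and lies below some row of B. Applied to the pairs (A, B) and (B, A) these four
   conditions match, which characterises L; transposition exchanges rows with columns and
   L with R. *)

lemma mem_bspan_iff: "v \<in> bspan Y \<longleftrightarrow> (\<forall>k. v k \<longrightarrow> (\<exists>y\<in>Y. y \<le> v \<and> y k))"
proof
  assume "v \<in> bspan Y"
  then obtain S where S: "S \<subseteq> Y" and v_sum: "v = (\<lambda>k. \<exists>x\<in>S. x k)"
    unfolding bspan_def by blast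
  show "\<forall>k. v k \<longrightarrow> (\<exists>y\<in>Y. y \<le> v \<and> y k)"
  proof (intro allI impI)
    fix k assume "v k"
    then obtain x where "x \<in> S" "x k" using v_sum by blast
    moreover have "x \<le> v" using \<open>x \<in> S\<close> v_sum by (simp add: le_fun_def) blast
    ultimately show "\<exists>y\<in>Y. y \<le> v \<and> y k" using S by blast
  qed
next
  assume covered: "\<forall>k. v k \<longrightarrow> (\<exists>y\<in>Y. y \<le> v \<and> y k)"
  have v_sum: "v = (\<lambda>k. \<exists>y\<in>{y \<in> Y. y \<le> v}. y k)"
  proof
    fix k
    show "v k = (\<exists>y\<in>{y \<in> Y. y \<le> v}. y k)"
    proof
      assume "v k"
      then show "\<exists>y\<in>{y \<in> Y. y \<le> v}. y k" using covered by blast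
    next
      assume "\<exists>y\<in>{y \<in> Y. y \<le> v}. y k"
      then show "v k" by (auto simp: le_fun_def)
    qed
  qed
  show "v \<in> bspan Y"
    unfolding bspan_def by (rule CollectI, rule exI[of _ "{y \<in> Y. y \<le> v}"]) (use v_sum in blast)
qed

lemma bspan_superset: "X \<subseteq> bspan X"
proof
  fix x assume "x \<in> X"
  then show "x \<in> bspan X" unfolding mem_bspan_iff by blast
qed

lemma bspan_subset_iff: "bspan X \<subseteq> bspan Y \<longleftrightarrow> X \<subseteq> bspan Y"
proof
  assume "bspan X \<subseteq> bspan Y"
  with bspan_superset show "X \<subseteq> bspan Y" by blast
next
  assume X: "X \<subseteq> bspan Y"
  show "bspan X \<subseteq> bspan Y"
  proof
    fix v assume v: "v \<in> bspan X"
    show "v \<in> bspan Y" unfolding mem_bspan_iff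
    proof (intro allI impI)
      fix k assume "v k"
      then obtain x where "x \<in> X" "x \<le> v" "x k"
        using v unfolding mem_bspan_iff by blast
      moreover have "x \<in> bspan Y" using X \<open>x \<in> X\<close> by blast
      with \<open>x k\<close> obtain y where "y \<in> Y" "y \<le> x" "y k"
        unfolding mem_bspan_iff by blast
      ultimately show "\<exists>y\<in>Y. y \<le> v \<and> y k"
        using order_trans by blast
    qed
  qed
qed

lemma rows_bmult_subset_bspan: "rows (bmult G B) \<subseteq> bspan (rows B)"
proof
  fix v assume "v \<in> rows (bmult G B)"
  then obtain i where v: "v = bmult G B i" by (auto simp: rows_def)
  show "v \<in> bspan (rows B)" unfolding mem_bspan_iff
  proof (intro allI impI)
    fix j assume "v j"
    then obtain k where "G i k" "B k j" using v by (auto simp: bmult_def)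
    then have "B k \<le> v" using v by (auto simp: bmult_def le_fun_def)
    with \<open>B k j\<close> show "\<exists>y\<in>rows B. y \<le> v \<and> y j" by (auto simp: rows_def)
  qed
qed

lemma left_multiple_iff:
  assumes rows_nonzero: "\<forall>i. \<exists>j. A i j"
  shows "(\<exists>G. in_Mn G \<and> A = bmult G B)
           \<longleftrightarrow> rows A \<subseteq> bspan (rows B) \<and> (\<forall>k. \<exists>i. B k \<le> A i)"
proof
  assume "\<exists>G. in_Mn G \<and> A = bmult G B"
  then obtain G where G: "in_Mn G" and A: "A = bmult G B" by blast
  have "\<exists>i. B k \<le> A i" for k
  proof -
    obtain i where "G i k" using G unfolding in_Mn_def by blast
    then have "B k \<le> A i" unfolding A bmult_def le_fun_def le_bool_def by blast
    then show ?thesis ..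
  qed
  with A show "rows A \<subseteq> bspan (rows B) \<and> (\<forall>k. \<exists>i. B k \<le> A i)"
    using rows_bmult_subset_bspan by simp
next
  assume "rows A \<subseteq> bspan (rows B) \<and> (\<forall>k. \<exists>i. B k \<le> A i)"
  then have spanned: "\<And>i. A i \<in> bspan (rows B)" and cover: "\<forall>k. \<exists>i. B k \<le> A i"
    by (auto simp: rows_def)
  have below: "\<exists>k. B k \<le> A i \<and> B k j" if "A i j" for i j
    using spanned[of i] that unfolding mem_bspan_iff rows_def by blast
  define G where "G = (\<lambda>i k. B k \<le> A i)"
  have "A = bmult G B"
  proof (intro ext iffI)
    fix i j assume "A i j"
    then show "bmult G B i j" using below unfolding G_def bmult_def by blast
  next
    fix i j assume "bmult G B i j"
    then show "A i j" unfolding G_def bmult_def le_fun_def le_bool_def by blast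
  qed
  moreover have "in_Mn G"
    unfolding in_Mn_def G_def
  proof (intro conjI allI)
    fix i
    obtain j where "A i j" using rows_nonzero by blast
    then show "\<exists>k. B k \<le> A i" using below by blast
  next
    fix k
    show "\<exists>i. B k \<le> A i" using cover by blast
  qed
  ultimately show "\<exists>G. in_Mn G \<and> A = bmult G B" by blast
qed

lemma genR_subset_iff:
  assumes rows_nonzero: "\<forall>i. \<exists>j. A i j"
  shows "genR A \<subseteq> genR B \<longleftrightarrow> rows A \<subseteq> row_space B \<and> (\<forall>i. \<exists>k. A i \<le> B k)"
proof
  assume sub: "genR A \<subseteq> genR B"
  have "A i \<in> genR A" for i
  proof -
    have "A i \<in> row_space A"
      using bspan_superset unfolding row_space_def rows_def by blast
    moreover have "A i \<noteq> (\<lambda>_. False)"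
      using rows_nonzero by metis
    ultimately show ?thesis
      unfolding genR_def rows_def by blast
  qed
  with sub show "rows A \<subseteq> row_space B \<and> (\<forall>i. \<exists>k. A i \<le> B k)"
    unfolding genR_def rows_def by blast
next
  assume "rows A \<subseteq> row_space B \<and> (\<forall>i. \<exists>k. A i \<le> B k)"
  then have space: "row_space A \<subseteq> row_space B" and below: "\<forall>i. \<exists>k. A i \<le> B k"
    by (simp_all add: row_space_def bspan_subset_iff)
  show "genR A \<subseteq> genR B"
  proof
    fix \<rho> assume \<rho>: "\<rho> \<in> genR A"
    then obtain i where "\<rho> \<le> A i"
      unfolding genR_def rows_def by blast
    moreover obtain k where "A i \<le> B k"
      using below by blast
    ultimately have "\<rho> \<le> B k"
      by (rule order_trans)
    with \<rho> space show "\<rho> \<in> genR B"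
      unfolding genR_def rows_def by blast
  qed
qed

lemma greenL_iff_genR_eq:
  assumes "in_Mn A" and "in_Mn B"
  shows "greenL A B \<longleftrightarrow> genR A = genR B"
proof -
  from assms have A_nonzero: "\<forall>i. \<exists>j. A i j" and B_nonzero: "\<forall>i. \<exists>j. B i j"
    unfolding in_Mn_def by blast+
  have "greenL A B \<longleftrightarrow> (rows A \<subseteq> row_space B \<and> (\<forall>k. \<exists>i. B k \<le> A i))
                        \<and> (rows B \<subseteq> row_space A \<and> (\<forall>i. \<exists>k. A i \<le> B k))"
    unfolding greenL_def row_space_def left_multiple_iff[OF A_nonzero]
      left_multiple_iff[OF B_nonzero] ..
  also have "\<dots> \<longleftrightarrow> genR A \<subseteq> genR B \<and> genR B \<subseteq> genR A"
    unfolding genR_subset_iff[OF A_nonzero] genR_subset_iff[OF B_nonzero] by blast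
  finally show ?thesis by blast
qed

definition btranspose :: "'n bmat \<Rightarrow> 'n bmat" where
  "btranspose A = (\<lambda>i j. A j i)"

lemma btranspose_btranspose [simp]: "btranspose (btranspose A) = A"
  by (simp add: btranspose_def)

lemma in_Mn_btranspose [simp]: "in_Mn (btranspose A) \<longleftrightarrow> in_Mn A"
  unfolding in_Mn_def btranspose_def by blast

lemma btranspose_bmult: "btranspose (bmult A B) = bmult (btranspose B) (btranspose A)"
  unfolding btranspose_def bmult_def by blast

lemma genC_eq_genR_btranspose: "genC A = genR (btranspose A)"
  unfolding genC_def genR_def col_space_def row_space_def cols_def rows_def btranspose_def
  by simp

lemma right_multiple_iff_left_multiple_btranspose:
  "(\<exists>G. in_Mn G \<and> A = bmult B G)
     \<longleftrightarrow> (\<exists>G. in_Mn G \<and> btranspose A = bmult G (btranspose B))"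
proof
  assume "\<exists>G. in_Mn G \<and> A = bmult B G"
  then obtain G where "in_Mn G" "A = bmult B G" by blast
  then show "\<exists>G. in_Mn G \<and> btranspose A = bmult G (btranspose B)"
    by (intro exI[of _ "btranspose G"]) (simp add: btranspose_bmult)
next
  assume "\<exists>G. in_Mn G \<and> btranspose A = bmult G (btranspose B)"
  then obtain G where "in_Mn G" "btranspose A = bmult G (btranspose B)" by blast
  then have "A = bmult B (btranspose G)"
    by (metis btranspose_bmult btranspose_btranspose)
  with \<open>in_Mn G\<close> show "\<exists>G. in_Mn G \<and> A = bmult B G"
    by (intro exI[of _ "btranspose G"]) simp
qed

lemma greenR_iff_greenL_btranspose: "greenR A B \<longleftrightarrow> greenL (btranspose A) (btranspose B)"
  unfolding greenR_def greenL_def right_multiple_iff_left_multiple_btranspose ..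

theorem theorem4p2:
  fixes \<alpha> \<beta> :: "'n::finite bmat"
  assumes "in_Mn \<alpha>" and "in_Mn \<beta>"
  shows "(greenL \<alpha> \<beta> \<longleftrightarrow> genR \<alpha> = genR \<beta>)
       \<and> (greenR \<alpha> \<beta> \<longleftrightarrow> genC \<alpha> = genC \<beta>)
       \<and> (greenH \<alpha> \<beta> \<longleftrightarrow> genR \<alpha> = genR \<beta> \<and> genC \<alpha> = genC \<beta>)"
proof -
  have L: "greenL \<alpha> \<beta> \<longleftrightarrow> genR \<alpha> = genR \<beta>"
    using assms by (rule greenL_iff_genR_eq)
  have R: "greenR \<alpha> \<beta> \<longleftrightarrow> genC \<alpha> = genC \<beta>"
    unfolding greenR_iff_greenL_btranspose genC_eq_genR_btranspose
    using assms by (simp add: greenL_iff_genR_eq)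
  show ?thesis
    unfolding greenH_def using L R by blast
qed

end
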